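(* Let $e\in\,]0,1[$ and define $U:[0,1]^2\to[0,1]$ by $$U(x,y)=\begin{cases}1 & \max(x,y)=1,\\ \max(x,y) & x,y\in\,]e,1[,\\ 0 & x,y\in[0,e[,\\ x & y=e,\\ y & x=e,\\ \min(x,y) & \text{otherwise.}\end{cases}$$ Then $U$ is a disjunctive uninorm with neutral element $e$, and for every $\alpha\in\,]0,1[$ with $\alpha\ne e$ the cut $U(\cdot,\alpha)$ is not a continuous function with range $[0,1]$. Consequently, for every continuous fuzzy negation $N$, the function $I(x,y)=U(N(x),y)$ has a unique representation as a $(U,N)$-implication with a continuous fuzzy negation: if $U'$ is a disjunctive uninorm with neutral element in $]0,1[$ and $N'$ is a continuous fuzzy negation with $U'(N'(x),y)=I(x,y)$ for all $x,y$, then $U'=U$ and $N'=N$.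
   Context: A fuzzy negation is a non-increasing map $N:[0,1]\to[0,1]$ with $N(0)=1$, $N(1)=0$. A uninorm is a map $U:[0,1]^2\to[0,1]$ that is commutative, associative, non-decreasing in each variable, and has a neutral element $e\in[0,1]$. A uninorm is disjunctive if $U(1,0)=1$. *)

theory Defs
  imports "HOL-Analysis.Analysis"
begin

definition fuzzy_negation :: "(real \<Rightarrow> real) \<Rightarrow> bool" where
  "fuzzy_negation N \<longleftrightarrow>
     (\<forall>x\<in>{0..1}. N x \<in> {0..1}) \<and>
     (\<forall>x\<in>{0..1}. \<forall>y\<in>{0..1}. x \<le> y \<longrightarrow> N y \<le> N x) \<and>
     N 0 = 1 \<and> N 1 = 0"

definition uninorm :: "(real \<Rightarrow> real \<Rightarrow> real) \<Rightarrow> real \<Rightarrow> bool" where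
  "uninorm U e \<longleftrightarrow>
     e \<in> {0..1} \<and>
     (\<forall>x\<in>{0..1}. \<forall>y\<in>{0..1}. U x y \<in> {0..1}) \<and>
     (\<forall>x\<in>{0..1}. \<forall>y\<in>{0..1}. U x y = U y x) \<and>
     (\<forall>x\<in>{0..1}. \<forall>y\<in>{0..1}. \<forall>z\<in>{0..1}. U (U x y) z = U x (U y z)) \<and>
     (\<forall>x\<in>{0..1}. \<forall>y\<in>{0..1}. \<forall>z\<in>{0..1}. x \<le> y \<longrightarrow> U x z \<le> U y z) \<and>
     (\<forall>x\<in>{0..1}. U e x = x)"

definition disjunctive :: "(real \<Rightarrow> real \<Rightarrow> real) \<Rightarrow> bool" where
  "disjunctive U \<longleftrightarrow> U 1 0 = 1"

definition Ue :: "real \<Rightarrow> real \<Rightarrow> real \<Rightarrow> real" where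
  "Ue e x y =
     (if max x y = 1 then 1
      else if e < x \<and> x < 1 \<and> e < y \<and> y < 1 then max x y
      else if 0 \<le> x \<and> x < e \<and> 0 \<le> y \<and> y < e then 0
      else if y = e then x
      else if x = e then y
      else min x y)"

end

theory Submission
  imports Defs
begin

text \<open>
  On each of the regions [0,e[, {e}, ]e,1[, {1} the uninorm acts by a simple rule, so its
  axioms reduce to a finite case analysis. For \<alpha> \<noteq> e in ]0,1[ the cut U(\<cdot>,\<alpha>) never takes
  the value e, so it cannot map [0,1] onto [0,1]. This is what makes the representation
  unique: if U'(N' x, y) = U(N x, y), pick x with N' x = e; evaluating at y = e' gives
  U(N x, e') = e, forcing e' = e; then N' = N follows by putting y = e, and U' = U because
  continuous negations are onto.
\<close>

lemma fuzzy_negation_image: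
  assumes "fuzzy_negation N" and "continuous_on {0..1} N"
  shows "N ` {0..1} = {0..1}"
proof
  show "N ` {0..1} \<subseteq> {0..1}"
    using assms(1) unfolding fuzzy_negation_def by auto
  show "{0..1} \<subseteq> N ` {0..1}"
  proof
    fix a :: real assume "a \<in> {0..1}"
    then have "N 1 \<le> a" "a \<le> N 0"
      using assms(1) unfolding fuzzy_negation_def by auto
    from IVT2'[OF this _ assms(2)] show "a \<in> N ` {0..1}" by auto
  qed
qed

lemma uninorm_implication_unique:
  assumes U: "uninorm U e" and U': "uninorm U' e'"
    and N: "fuzzy_negation N"
    and N': "fuzzy_negation N'" "continuous_on {0..1} N'"
    and eq: "\<forall>x\<in>{0..1}. \<forall>y\<in>{0..1}. U' (N' x) y = U (N x) y"
    and avoids: "e' \<noteq> e \<Longrightarrow> e \<notin> (\<lambda>x. U x e') ` {0..1}"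
  shows "e' = e" and "\<forall>x\<in>{0..1}. N' x = N x" and "\<forall>x\<in>{0..1}. \<forall>y\<in>{0..1}. U' x y = U x y"
proof -
  have e: "e \<in> {0..1}" and e': "e' \<in> {0..1}"
    using U U' unfolding uninorm_def by auto
  have N_range: "N x \<in> {0..1}" if "x \<in> {0..1}" for x
    using N that unfolding fuzzy_negation_def by auto
  have U'_neutral: "U' x e' = x" if "x \<in> {0..1}" for x
    using U' that unfolding uninorm_def by auto
  have U_neutral: "U x e = x" if "x \<in> {0..1}" for x
    using U that unfolding uninorm_def by auto
  have N'_onto: "N' ` {0..1} = {0..1}"
    using fuzzy_negation_image[OF N'] .
  show ee: "e' = e"
  proof (rule ccontr)
    assume "e' \<noteq> e"
    obtain x where x: "x \<in> {0..1}" "N' x = e"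
      using e N'_onto by (metis imageE)
    have "U (N x) e' = e"
      using eq x e' U'_neutral[OF e] by metis
    with avoids[OF \<open>e' \<noteq> e\<close>] N_range[OF x(1)] show False by auto
  qed
  have NN: "N' x = N x" if "x \<in> {0..1}" for x
  proof -
    have "N' x = U' (N' x) e'"
      using U'_neutral[of "N' x"] N'_onto that by (metis image_eqI)
    also have "\<dots> = U (N x) e" using eq that e' ee by simp
    also have "\<dots> = N x" using U_neutral N_range that by simp
    finally show ?thesis .
  qed
  then show "\<forall>x\<in>{0..1}. N' x = N x" by blast
  show "\<forall>x\<in>{0..1}. \<forall>y\<in>{0..1}. U' x y = U x y"
  proof (intro ballI)
    fix a y :: real assume "a \<in> {0..1}" "y \<in> {0..1}"
    then obtain x where "x \<in> {0..1}" "a = N' x"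
      using N'_onto by (metis imageE)
    then show "U' a y = U a y"
      using eq NN \<open>y \<in> {0..1}\<close> by simp
  qed
qed

context
  fixes e :: real
  assumes e_pos: "0 < e" and e_less_1: "e < 1"
begin

lemma Ue_one_left: "y \<le> 1 \<Longrightarrow> Ue e 1 y = 1"
  unfolding Ue_def by (simp add: max_def)

lemma Ue_one_right: "x \<le> 1 \<Longrightarrow> Ue e x 1 = 1"
  unfolding Ue_def by (simp add: max_def)

lemma Ue_neutral_left: "y \<le> 1 \<Longrightarrow> Ue e e y = y"
  using e_less_1 unfolding Ue_def by (auto simp add: max_def)

lemma Ue_neutral_right: "x \<le> 1 \<Longrightarrow> Ue e x e = x"
  using e_less_1 unfolding Ue_def by (auto simp add: max_def)

lemma Ue_low_low: "0 \<le> x \<Longrightarrow> x < e \<Longrightarrow> 0 \<le> y \<Longrightarrow> y < e \<Longrightarrow> Ue e x y = 0"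
  using e_less_1 unfolding Ue_def by (auto simp add: max_def)

lemma Ue_high_high: "e < x \<Longrightarrow> x < 1 \<Longrightarrow> e < y \<Longrightarrow> y < 1 \<Longrightarrow> Ue e x y = max x y"
  using e_less_1 unfolding Ue_def by (auto simp add: max_def)

lemma Ue_low_high: "0 \<le> x \<Longrightarrow> x < e \<Longrightarrow> e < y \<Longrightarrow> y < 1 \<Longrightarrow> Ue e x y = x"
  using e_less_1 unfolding Ue_def by (auto simp add: max_def min_def)

lemma Ue_high_low: "0 \<le> y \<Longrightarrow> y < e \<Longrightarrow> e < x \<Longrightarrow> x < 1 \<Longrightarrow> Ue e x y = y"
  using e_less_1 unfolding Ue_def by (auto simp add: max_def min_def)

lemmas Ue_regions = Ue_one_left Ue_one_right Ue_neutral_left Ue_neutral_right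
  Ue_low_low Ue_high_high Ue_low_high Ue_high_low

lemma unit_interval_regions_cases:
  assumes "x \<in> {0..1}"
  obtains "0 \<le> x" "x < e" | "x = e" | "e < x" "x < 1" | "x = 1"
  using assms by force

lemma Ue_range: "x \<in> {0..1} \<Longrightarrow> y \<in> {0..1} \<Longrightarrow> Ue e x y \<in> {0..1}"
  by (erule unit_interval_regions_cases; erule unit_interval_regions_cases)
    (use e_pos e_less_1 in \<open>auto simp add: Ue_regions max_def\<close>)

lemma Ue_commute: "x \<in> {0..1} \<Longrightarrow> y \<in> {0..1} \<Longrightarrow> Ue e x y = Ue e y x"
  by (erule unit_interval_regions_cases; erule unit_interval_regions_cases)
    (use e_pos e_less_1 in \<open>simp_all add: Ue_regions max_def\<close>)

lemma Ue_assoc: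
  "x \<in> {0..1} \<Longrightarrow> y \<in> {0..1} \<Longrightarrow> z \<in> {0..1} \<Longrightarrow> Ue e (Ue e x y) z = Ue e x (Ue e y z)"
  by (erule unit_interval_regions_cases; erule unit_interval_regions_cases;
      erule unit_interval_regions_cases)
    (use e_pos e_less_1 in \<open>simp_all add: Ue_regions max_def\<close>)

lemma Ue_mono_left:
  "x \<in> {0..1} \<Longrightarrow> y \<in> {0..1} \<Longrightarrow> z \<in> {0..1} \<Longrightarrow> x \<le> y \<Longrightarrow> Ue e x z \<le> Ue e y z"
  by (erule unit_interval_regions_cases; erule unit_interval_regions_cases;
      erule unit_interval_regions_cases)
    (use e_pos e_less_1 in \<open>auto simp add: Ue_regions max_def\<close>)

lemma uninorm_Ue: "uninorm (Ue e) e"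
  unfolding uninorm_def
  using Ue_range Ue_commute Ue_assoc Ue_mono_left Ue_neutral_left Ue_neutral_right e_pos e_less_1
  by auto

lemma disjunctive_Ue: "disjunctive (Ue e)"
  unfolding disjunctive_def by (simp add: Ue_one_left)

lemma Ue_cut_ne_neutral:
  "x \<in> {0..1} \<Longrightarrow> \<alpha> \<in> {0..1} \<Longrightarrow> 0 < \<alpha> \<Longrightarrow> \<alpha> < 1 \<Longrightarrow> \<alpha> \<noteq> e \<Longrightarrow> Ue e x \<alpha> \<noteq> e"
  by (erule unit_interval_regions_cases; erule unit_interval_regions_cases)
    (use e_pos e_less_1 in \<open>auto simp add: Ue_regions max_def\<close>)

lemma Ue_cut_avoids_neutral:
  assumes "0 < \<alpha>" "\<alpha> < 1" "\<alpha> \<noteq> e"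
  shows "e \<notin> (\<lambda>x. Ue e x \<alpha>) ` {0..1}"
proof
  assume "e \<in> (\<lambda>x. Ue e x \<alpha>) ` {0..1}"
  then obtain x where "x \<in> {0..1}" "Ue e x \<alpha> = e" by auto
  moreover have "\<alpha> \<in> {0..1}" using assms(1,2) by simp
  ultimately show False
    using Ue_cut_ne_neutral[OF _ _ assms] by simp
qed

end

theorem mainTheorem6:
  fixes e :: real
  assumes "0 < e" and "e < 1"
  shows "uninorm (Ue e) e \<and> disjunctive (Ue e)
    \<and> (\<forall>\<alpha>. 0 < \<alpha> \<and> \<alpha> < 1 \<and> \<alpha> \<noteq> e \<longrightarrow>
          \<not> (continuous_on {0..1} (\<lambda>x. Ue e x \<alpha>) \<and> (\<lambda>x. Ue e x \<alpha>) ` {0..1} = {0..1}))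
    \<and> (\<forall>N. fuzzy_negation N \<and> continuous_on {0..1} N \<longrightarrow>
          (\<forall>U' e' N'. uninorm U' e' \<and> 0 < e' \<and> e' < 1 \<and> disjunctive U'
              \<and> fuzzy_negation N' \<and> continuous_on {0..1} N'
              \<and> (\<forall>x\<in>{0..1}. \<forall>y\<in>{0..1}. U' (N' x) y = Ue e (N x) y)
            \<longrightarrow> (\<forall>x\<in>{0..1}. \<forall>y\<in>{0..1}. U' x y = Ue e x y)
                \<and> (\<forall>x\<in>{0..1}. N' x = N x)))"
proof (intro conjI allI impI)
  show "uninorm (Ue e) e" and "disjunctive (Ue e)"
    using uninorm_Ue disjunctive_Ue assms by auto
next
  fix \<alpha> assume "0 < \<alpha> \<and> \<alpha> < 1 \<and> \<alpha> \<noteq> e"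
  then have "e \<notin> (\<lambda>x. Ue e x \<alpha>) ` {0..1}"
    using Ue_cut_avoids_neutral[OF assms] by simp
  moreover have "e \<in> {0..1}" using assms by simp
  ultimately show "\<not> (continuous_on {0..1} (\<lambda>x. Ue e x \<alpha>) \<and> (\<lambda>x. Ue e x \<alpha>) ` {0..1} = {0..1})"
    by metis
next
  fix N U' e' N'
  assume "fuzzy_negation N \<and> continuous_on {0..1} N"
  then have N: "fuzzy_negation N" by simp
  assume "uninorm U' e' \<and> 0 < e' \<and> e' < 1 \<and> disjunctive U'
    \<and> fuzzy_negation N' \<and> continuous_on {0..1} N'
    \<and> (\<forall>x\<in>{0..1}. \<forall>y\<in>{0..1}. U' (N' x) y = Ue e (N x) y)"
  then have U': "uninorm U' e'" and e': "0 < e'" "e' < 1"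
    and N': "fuzzy_negation N'" "continuous_on {0..1} N'"
    and eq: "\<forall>x\<in>{0..1}. \<forall>y\<in>{0..1}. U' (N' x) y = Ue e (N x) y"
    by simp_all
  have "e' \<noteq> e \<Longrightarrow> e \<notin> (\<lambda>x. Ue e x e') ` {0..1}"
    using Ue_cut_avoids_neutral[OF assms e'] .
  from uninorm_implication_unique(2,3)[OF uninorm_Ue[OF assms] U' N N' eq this]
  show "\<forall>x\<in>{0..1}. \<forall>y\<in>{0..1}. U' x y = Ue e x y" and "\<forall>x\<in>{0..1}. N' x = N x"
    by blast+
qed

end
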